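(* In the setting below, any two correct sink members are intertwined: for all correct $i,j\in V_{\mathit{sink}}$ (possibly $i=j$), every quorum $Q$ of $i$ and every quorum $Q'$ of $j$ satisfy $|Q\cap Q'|>f$.
   Context: Processes and faults: $\Pi$ is a finite set of processes, $f\ge0$ a known integer; $W\subseteq\Pi$ is the set of correct processes and $F=\Pi\setminus W$ the Byzantine faulty processes, $|F|\le f$. Faulty processes may declare arbitrary slices. Slices and quorums: each process $i$ has a set $\mathcal{S}_i$ of slices (subsets of $\Pi$). $Q\subseteq\Pi$ is a quorum if every $i\in Q$ has some $S\in\mathcal{S}_i$ with $S\subseteq Q$; a quorum of $i$ is a quorum containing $i$. Two correct processes $i,j$ are intertwined if $|Q\cap Q'|>f$ for every quorum $Q$ of $i$ and every quorum $Q'$ of $j$. Knowledge graph: each process $i$ is given $\mathit{PD}_i\subseteq\Pi$; $G_{\mathit{di}}$ is the directed graph on $\Pi$ with edge $(i,j)$ iff $j\in\mathit{PD}_i$. A sink component is a strongly connected component of $G_{\mathit{di}}$ from which no path leads outside it. A directed graph is $k$-OSR if (1) its underlying undirected graph is connected; (2) its condensation into strongly connected components has exactly one sink $G_{\mathit{sink}}$; (3) $G_{\mathit{sink}}$ is $k$-strongly connected (every ordered pair of its nodes joined by $k$ node-disjoint directed paths); (4) from every node outside $G_{\mathit{sink}}$ to every node in it there are at least $k$ node-disjoint directed paths. Standing assumption: $G_{\mathit{di}}$ has a unique sink component with vertex set $V_{\mathit{sink}}$, which contains at least $2f+1$ correct processes, and the graph obtained from $G_{\mathit{di}}$ by deleting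 $F$ is $(f+1)$-OSR. Slice construction: let $m=\lceil (|V_{\mathit{sink}}|+f+1)/2\rceil$. Every correct $i\in V_{\mathit{sink}}$ has $\mathcal{S}_i=\{S\subseteq V_{\mathit{sink}}: |S|=m\}$. Every correct $i\notin V_{\mathit{sink}}$ is given a set $V_i\subseteq V_{\mathit{sink}}$ containing at least $f+1$ correct members of $V_{\mathit{sink}}$, and has $\mathcal{S}_i=\{S\subseteq V_i: |S|=f+1\}$. *)

theory Defs
  imports Complex_Main
begin

definition dpath :: "'a set \<Rightarrow> ('a \<times> 'a) set \<Rightarrow> 'a \<Rightarrow> 'a \<Rightarrow> 'a list \<Rightarrow> bool" where
  "dpath V E u v p \<longleftrightarrow> p \<noteq> [] \<and> hd p = u \<and> last p = v \<and> distinct p \<and> set p \<subseteq> V \<and>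
     (\<forall>i. Suc i < length p \<longrightarrow> (p ! i, p ! Suc i) \<in> E)"

definition inner_nodes :: "'a list \<Rightarrow> 'a set" where
  "inner_nodes p = set (butlast (tl p))"

definition disjoint_paths :: "nat \<Rightarrow> 'a set \<Rightarrow> ('a \<times> 'a) set \<Rightarrow> 'a \<Rightarrow> 'a \<Rightarrow> bool" where
  "disjoint_paths k V E u v \<longleftrightarrow>
     (\<exists>ps. length ps = k \<and> distinct ps \<and> (\<forall>p\<in>set ps. dpath V E u v p) \<and>
        (\<forall>i j. i < k \<and> j < k \<and> i \<noteq> j \<longrightarrow> inner_nodes (ps ! i) \<inter> inner_nodes (ps ! j) = {}))"

definition reach :: "'a set \<Rightarrow> ('a \<times> 'a) set \<Rightarrow> 'a \<Rightarrow> 'a \<Rightarrow> bool" where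
  "reach V E u v \<longleftrightarrow> (u, v) \<in> (E \<inter> (V \<times> V))\<^sup>*"

definition scc :: "'a set \<Rightarrow> ('a \<times> 'a) set \<Rightarrow> 'a set \<Rightarrow> bool" where
  "scc V E C \<longleftrightarrow> C \<noteq> {} \<and> C \<subseteq> V \<and> (\<forall>u\<in>C. \<forall>v\<in>C. reach V E u v) \<and>
     (\<forall>w\<in>V. (\<exists>u\<in>C. reach V E u w \<and> reach V E w u) \<longrightarrow> w \<in> C)"

definition sink_component :: "'a set \<Rightarrow> ('a \<times> 'a) set \<Rightarrow> 'a set \<Rightarrow> bool" where
  "sink_component V E C \<longleftrightarrow> scc V E C \<and> (\<forall>u\<in>C. \<forall>w. reach V E u w \<longrightarrow> w \<in> C)"

definition weakly_connected :: "'a set \<Rightarrow> ('a \<times> 'a) set \<Rightarrow> bool" where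
  "weakly_connected V E \<longleftrightarrow>
     (\<forall>u\<in>V. \<forall>v\<in>V. (u, v) \<in> ((E \<inter> (V \<times> V)) \<union> (E \<inter> (V \<times> V))\<inverse>)\<^sup>*)"

definition k_strongly_connected :: "nat \<Rightarrow> 'a set \<Rightarrow> ('a \<times> 'a) set \<Rightarrow> bool" where
  "k_strongly_connected k V E \<longleftrightarrow> (\<forall>u\<in>V. \<forall>v\<in>V. u \<noteq> v \<longrightarrow> disjoint_paths k V E u v)"

definition k_osr :: "nat \<Rightarrow> 'a set \<Rightarrow> ('a \<times> 'a) set \<Rightarrow> bool" where
  "k_osr k V E \<longleftrightarrow> weakly_connected V E \<and> (\<exists>!C. sink_component V E C) \<and>
     (\<forall>C. sink_component V E C \<longrightarrow>
        k_strongly_connected k C (E \<inter> (C \<times> C)) \<and>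
        (\<forall>u\<in>V - C. \<forall>v\<in>C. disjoint_paths k V E u v))"

definition knowledge_edges :: "'p set \<Rightarrow> ('p \<Rightarrow> 'p set) \<Rightarrow> ('p \<times> 'p) set" where
  "knowledge_edges Pi PD = {(i, j). i \<in> Pi \<and> j \<in> Pi \<and> j \<in> PD i}"

definition is_quorum :: "'p set \<Rightarrow> ('p \<Rightarrow> 'p set set) \<Rightarrow> 'p set \<Rightarrow> bool" where
  "is_quorum Pi slices Q \<longleftrightarrow> Q \<subseteq> Pi \<and> (\<forall>i\<in>Q. \<exists>S\<in>slices i. S \<subseteq> Q)"

definition intertwined :: "'p set \<Rightarrow> ('p \<Rightarrow> 'p set set) \<Rightarrow> nat \<Rightarrow> 'p \<Rightarrow> 'p \<Rightarrow> bool" where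
  "intertwined Pi slices f i j \<longleftrightarrow>
     (\<forall>Q Q'. is_quorum Pi slices Q \<and> i \<in> Q \<and> is_quorum Pi slices Q' \<and> j \<in> Q' \<longrightarrow>
        card (Q \<inter> Q') > f)"

end

theory Submission
  imports Defs
begin

text \<open>Every slice of a correct sink member is a subset of \<open>Vsink\<close> of size
  \<open>m = \<lceil>(|Vsink| + f + 1)/2\<rceil>\<close>, so two such slices overlap in more than \<open>f\<close>
  elements by inclusion-exclusion inside \<open>Vsink\<close>. A quorum of a process contains one
  of its slices, hence quorums of correct sink members overlap in more than \<open>f\<close> elements.\<close>

lemma card_Int_gt_of_card_sum_gt:
  fixes f :: nat
  assumes "finite V" "S \<subseteq> V" "T \<subseteq> V" "card V + f < card S + card T"
  shows "f < card (S \<inter> T)"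
proof -
  have "finite S" "finite T" using assms finite_subset by auto
  then have "card (S \<union> T) + card (S \<inter> T) = card S + card T" by (rule card_Un_Int[symmetric])
  moreover have "card (S \<union> T) \<le> card V" using assms by (intro card_mono) auto
  ultimately show ?thesis using assms(4) by linarith
qed

lemma le_two_mult_ceiling_half: "n \<le> 2 * nat \<lceil>real n / 2\<rceil>"
proof -
  have "real n / 2 \<le> real_of_int \<lceil>real n / 2\<rceil>" by (rule le_of_int_ceiling)
  then show ?thesis by linarith
qed

lemma intertwined_if_slices_intersect:
  assumes "finite Pi"
    and "\<And>S T. S \<in> slices i \<Longrightarrow> T \<in> slices j \<Longrightarrow> f < card (S \<inter> T)"
  shows "intertwined Pi slices f i j"
  unfolding intertwined_def
proof (intro allI impI)
  fix Q Q' assume quorums: "is_quorum Pi slices Q \<and> i \<in> Q \<and> is_quorum Pi slices Q' \<and> j \<in> Q'"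
  then obtain S T where "S \<in> slices i" "S \<subseteq> Q" "T \<in> slices j" "T \<subseteq> Q'"
    unfolding is_quorum_def by blast
  then have "f < card (S \<inter> T)" and "S \<inter> T \<subseteq> Q \<inter> Q'" using assms(2) by auto
  moreover have "finite (Q \<inter> Q')"
    using quorums \<open>finite Pi\<close> unfolding is_quorum_def by (meson finite_Int finite_subset)
  ultimately show "f < card (Q \<inter> Q')" by (meson card_mono less_le_trans)
qed

theorem lemma3:
  fixes Pi W :: "'p set" and f :: nat and PD :: "'p \<Rightarrow> 'p set"
    and slices :: "'p \<Rightarrow> 'p set set" and Vsink :: "'p set" and V :: "'p \<Rightarrow> 'p set"
  assumes fin: "finite Pi"
    and W: "W \<subseteq> Pi"
    and F: "card (Pi - W) \<le> f"
    and PD: "\<forall>i\<in>Pi. PD i \<subseteq> Pi"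
    and slices_sub: "\<forall>i\<in>Pi. \<forall>S\<in>slices i. S \<subseteq> Pi"
    and sink: "sink_component Pi (knowledge_edges Pi PD) Vsink"
    and sink_unique: "\<forall>C. sink_component Pi (knowledge_edges Pi PD) C \<longrightarrow> C = Vsink"
    and sink_correct: "card (Vsink \<inter> W) \<ge> 2 * f + 1"
    and osr: "k_osr (f + 1) W (knowledge_edges Pi PD \<inter> (W \<times> W))"
    and slices_sink: "\<forall>i\<in>W \<inter> Vsink. slices i =
        {S. S \<subseteq> Vsink \<and> card S = nat \<lceil>real (card Vsink + f + 1) / 2\<rceil>}"
    and V_sub: "\<forall>i\<in>W - Vsink. V i \<subseteq> Vsink \<and> card (V i \<inter> W) \<ge> f + 1"
    and slices_out: "\<forall>i\<in>W - Vsink. slices i = {S. S \<subseteq> V i \<and> card S = f + 1}"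
  shows "\<forall>i\<in>W \<inter> Vsink. \<forall>j\<in>W \<inter> Vsink. intertwined Pi slices f i j"
proof (intro ballI intertwined_if_slices_intersect[OF fin])
  fix i j S T assume "i \<in> W \<inter> Vsink" "j \<in> W \<inter> Vsink" "S \<in> slices i" "T \<in> slices j"
  define m where "m = nat \<lceil>real (card Vsink + f + 1) / 2\<rceil>"
  have "S \<subseteq> Vsink" "T \<subseteq> Vsink" and "card S = m" "card T = m"
    using slices_sink \<open>i \<in> W \<inter> Vsink\<close> \<open>j \<in> W \<inter> Vsink\<close> \<open>S \<in> slices i\<close> \<open>T \<in> slices j\<close>
    unfolding m_def by auto
  moreover have "card Vsink + f + 1 \<le> 2 * m"
    unfolding m_def by (rule le_two_mult_ceiling_half)
  moreover have "finite Vsink"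
    using sink fin unfolding sink_component_def scc_def by (meson finite_subset)
  ultimately show "f < card (S \<inter> T)"
    by (intro card_Int_gt_of_card_sum_gt[of Vsink]) auto
qed

end
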